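(* Let $I=\{a,b,c,d,e\}$ and $X=I^{\mathbb N_0}$ with the metric $\rho(x,y)=0$ if $x=y$ and $\rho(x,y)=\frac1{i+1}$ where $i=\min\{j:x_j\ne y_j\}$ otherwise. Let $\sigma$ be the shift $\sigma(x_0,x_1,\dots)=(x_1,x_2,\dots)$. Let $U=\{0,1,2,3\}$ and define $F_0=\sigma^2$, $F_1=\sigma^3$, $F_2\equiv b^\infty$ (constant map), and $F_3(x)=(ab)^\infty$ if $x_0=b$, $F_3(x)=b^\infty$ otherwise. Consider the control system $x_{n+1}=F_{u_n}(x_n)$ and let $Q\subset X$ be the set of all sequences that are infinite concatenations $w_0w_1w_2\cdots$ of words $w_i\in\{ab,\,cde\}$. Then $Q$ is (compact and) equi-invariant in the mean, but not finitely equi-invariant.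
   Context: For $\omega=(\omega_0,\omega_1,\dots)\in\mathscr U=U^{\mathbb N_0}$ and $x\in X$: $\phi(0,x,\omega)=x$, $\phi(k,x,\omega)=F_{\omega_{k-1}}\circ\cdots\circ F_{\omega_0}(x)$. $d(y,Q)=\inf_{q\in Q}\rho(y,q)$, $B_\varepsilon(Q)=\{y:d(y,Q)<\varepsilon\}$, $B(x,\delta)$ open ball, $\mathbb N=\{1,2,\dots\}$. A point $x\in Q$ is a finitely equi-invariant point of $Q$ if for every $\varepsilon>0$ there exist $\delta>0$ and a finite set $F\subset\mathscr U$ such that for every $y\in B(x,\delta)\cap Q$ there is $\omega\in F$ with $\phi(k,y,\omega)\in B_\varepsilon(Q)$ for all $k\in\mathbb N_0$. It is an equi-invariant point in the mean of $Q$ if for every $\varepsilon>0$ there exist $\delta>0$ and $\omega\in\mathscr U$ such that $\frac1n\sum_{i=0}^{n-1}d(\phi(i,y,\omega),Q)<\varepsilon$ for all $n\in\mathbb N$ and all $y\in B(x,\delta)\cap Q$. $Q$ has one of these properties if all its points do. *)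

theory Defs
  imports "HOL-Analysis.Analysis" "HOL-Library.Stream"
begin

definition ctrl_seqs :: "'u set \<Rightarrow> (nat \<Rightarrow> 'u) set" where
  "ctrl_seqs U = {\<omega>. \<forall>k. \<omega> k \<in> U}"

fun phi :: "('u \<Rightarrow> 'x \<Rightarrow> 'x) \<Rightarrow> nat \<Rightarrow> 'x \<Rightarrow> (nat \<Rightarrow> 'u) \<Rightarrow> 'x" where
  "phi F 0 x \<omega> = x"
| "phi F (Suc k) x \<omega> = F (\<omega> k) (phi F k x \<omega>)"

definition setdist :: "('x \<Rightarrow> 'x \<Rightarrow> real) \<Rightarrow> 'x \<Rightarrow> 'x set \<Rightarrow> real" where
  "setdist rho y Q = (INF q\<in>Q. rho y q)"

definition nbhd :: "('x \<Rightarrow> 'x \<Rightarrow> real) \<Rightarrow> real \<Rightarrow> 'x set \<Rightarrow> 'x set" where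
  "nbhd rho \<epsilon> Q = {y. setdist rho y Q < \<epsilon>}"

definition oball :: "('x \<Rightarrow> 'x \<Rightarrow> real) \<Rightarrow> 'x \<Rightarrow> real \<Rightarrow> 'x set" where
  "oball rho x \<delta> = {y. rho x y < \<delta>}"

definition fin_equi_inv_point ::
  "('x \<Rightarrow> 'x \<Rightarrow> real) \<Rightarrow> ('u \<Rightarrow> 'x \<Rightarrow> 'x) \<Rightarrow> 'u set \<Rightarrow> 'x set \<Rightarrow> 'x \<Rightarrow> bool" where
  "fin_equi_inv_point rho F U Q x \<longleftrightarrow> x \<in> Q \<and>
     (\<forall>\<epsilon>>0. \<exists>\<delta>>0. \<exists>Fs. Fs \<subseteq> ctrl_seqs U \<and> finite Fs \<and>
        (\<forall>y \<in> oball rho x \<delta> \<inter> Q. \<exists>\<omega>\<in>Fs. \<forall>k. phi F k y \<omega> \<in> nbhd rho \<epsilon> Q))"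

definition fin_equi_inv ::
  "('x \<Rightarrow> 'x \<Rightarrow> real) \<Rightarrow> ('u \<Rightarrow> 'x \<Rightarrow> 'x) \<Rightarrow> 'u set \<Rightarrow> 'x set \<Rightarrow> bool" where
  "fin_equi_inv rho F U Q \<longleftrightarrow> (\<forall>x\<in>Q. fin_equi_inv_point rho F U Q x)"

definition equi_inv_mean_point ::
  "('x \<Rightarrow> 'x \<Rightarrow> real) \<Rightarrow> ('u \<Rightarrow> 'x \<Rightarrow> 'x) \<Rightarrow> 'u set \<Rightarrow> 'x set \<Rightarrow> 'x \<Rightarrow> bool" where
  "equi_inv_mean_point rho F U Q x \<longleftrightarrow> x \<in> Q \<and>
     (\<forall>\<epsilon>>0. \<exists>\<delta>>0. \<exists>\<omega>\<in>ctrl_seqs U.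
        \<forall>n::nat. n \<ge> 1 \<longrightarrow> (\<forall>y \<in> oball rho x \<delta> \<inter> Q.
           (1 / real n) * (\<Sum>i<n. setdist rho (phi F i y \<omega>) Q) < \<epsilon>))"

definition equi_inv_mean ::
  "('x \<Rightarrow> 'x \<Rightarrow> real) \<Rightarrow> ('u \<Rightarrow> 'x \<Rightarrow> 'x) \<Rightarrow> 'u set \<Rightarrow> 'x set \<Rightarrow> bool" where
  "equi_inv_mean rho F U Q \<longleftrightarrow> (\<forall>x\<in>Q. equi_inv_mean_point rho F U Q x)"

datatype sym = A | B | C | D | E

type_synonym seq = "nat \<Rightarrow> sym"

definition rho :: "seq \<Rightarrow> seq \<Rightarrow> real" where
  "rho x y = (if x = y then 0 else 1 / (real (LEAST j. x j \<noteq> y j) + 1))"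

definition shift :: "seq \<Rightarrow> seq" where
  "shift x = (\<lambda>n. x (Suc n))"

definition Fex :: "nat \<Rightarrow> seq \<Rightarrow> seq" where
  "Fex u x = (if u = 0 then (shift ^^ 2) x
              else if u = 1 then (shift ^^ 3) x
              else if u = 2 then (\<lambda>n. B)
              else if x 0 = B then (\<lambda>n. if even n then A else B)
              else (\<lambda>n. B))"

definition Uex :: "nat set" where
  "Uex = {0, 1, 2, 3}"

definition Qex :: "seq set" where
  "Qex = {x. \<exists>ws. sset ws \<subseteq> {[A, B], [C, D, E]} \<and> x = snth (flat ws)}"

end

theory Submission
  imports Defs
begin

(* Compactness: Q is the image of the compact product space {ab, cde}\<^sup>\<nat> under flattening,
  which is continuous because the n-th letter only depends on the first n+1 words.

  Mean equi-invariance: near x \<in> Q, all points of Q share a long prefix of words with x, so the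
  controls that strip those words (shift by 2 or 3) keep them in Q; afterwards one step of F\<^sub>2
  leaves Q once (at distance \<le> 1), F\<^sub>3 returns to (ab)\<^sup>\<infinity>, and F\<^sub>0 keeps it there. Postponing the
  single excursion makes the averages small.

  Failure of finite equi-invariance at (ab)\<^sup>\<infinity>: staying within distance 1 of Q forces, step by
  step, the control that strips the current leading word, so a control sequence determines the
  point it serves; but every ball around (ab)\<^sup>\<infinity> contains the infinitely many points
  (ab)\<^sup>m cde (ab)\<^sup>\<infinity>. *)

lemma rho_nonneg: "0 \<le> rho x y"
  by (simp add: rho_def)

lemma rho_le_1: "rho x y \<le> 1"
  by (simp add: rho_def)

lemma rho_self [simp]: "rho x x = 0"
  by (simp add: rho_def)

lemma rho_le_of_agree:
  assumes "\<forall>j<n. x j = y j"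
  shows "rho x y \<le> 1 / (real n + 1)"
proof (cases "x = y")
  case False
  then have "\<exists>j. x j \<noteq> y j" by (auto simp: fun_eq_iff)
  then have "x (LEAST j. x j \<noteq> y j) \<noteq> y (LEAST j. x j \<noteq> y j)" by (rule LeastI_ex)
  then have "n \<le> (LEAST j. x j \<noteq> y j)" using assms by (meson not_less)
  then show ?thesis using False by (simp add: rho_def frac_le)
qed (simp add: rho_def)

lemma agree_of_rho_less:
  assumes "rho x y < 1 / (real n + 1)" "j \<le> n"
  shows "x j = y j"
proof (cases "x = y")
  case False
  define L where "L = (LEAST j. x j \<noteq> y j)"
  have "1 / (real L + 1) < 1 / (real n + 1)"
    using assms(1) False by (simp add: rho_def L_def)
  then have "n < L"
  proof (rule contrapos_pp)
    assume "\<not> n < L"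
    then show "\<not> 1 / (real L + 1) < 1 / (real n + 1)" by (simp add: not_less frac_le)
  qed
  then show ?thesis using assms(2) not_less_Least[of j "\<lambda>j. x j \<noteq> y j"] by (simp add: L_def)
qed simp

lemma rho_ultrametric: "rho x z \<le> max (rho x y) (rho y z)"
proof (cases "x = y \<or> y = z")
  case False
  define a where "a = (LEAST j. x j \<noteq> y j)"
  define b where "b = (LEAST j. y j \<noteq> z j)"
  have "\<forall>j<min a b. x j = z j"
  proof (intro allI impI)
    fix j assume "j < min a b"
    then have "x j = y j" "y j = z j"
      using not_less_Least[of j "\<lambda>j. x j \<noteq> y j"] not_less_Least[of j "\<lambda>j. y j \<noteq> z j"]
      unfolding a_def b_def by auto
    then show "x j = z j" by simp
  qed
  then have "rho x z \<le> 1 / (real (min a b) + 1)" by (rule rho_le_of_agree)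
  also have "\<dots> = max (1 / (real a + 1)) (1 / (real b + 1))"
    by (cases "a \<le> b") (simp_all add: frac_le max_absorb1 max_absorb2)
  also have "\<dots> = max (rho x y) (rho y z)"
    using False by (simp add: rho_def a_def b_def)
  finally show ?thesis .
qed (auto simp: rho_def)

lemma Metric_space_rho: "Metric_space UNIV rho"
proof
  fix x y z :: seq
  show "0 \<le> rho x y" by (rule rho_nonneg)
  show "rho x y = 0 \<longleftrightarrow> x = y" by (simp add: rho_def)
  show "rho x y = rho y x" by (simp add: rho_def eq_commute)
  show "rho x z \<le> rho x y + rho y z"
    using rho_ultrametric[of x z y] rho_nonneg[of x y] rho_nonneg[of y z] by linarith
qed

lemma setdist_le:
  assumes "\<forall>q\<in>Q. 0 \<le> d y q" "q \<in> Q"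
  shows "setdist d y Q \<le> d y q"
  unfolding setdist_def using assms by (intro cINF_lower bdd_belowI2) auto

lemma setdist_nonneg: "\<forall>q\<in>Q. 0 \<le> d y q \<Longrightarrow> Q \<noteq> {} \<Longrightarrow> 0 \<le> setdist d y Q"
  unfolding setdist_def by (rule cINF_greatest) auto

lemma setdist_eq_0:
  assumes "\<forall>q\<in>Q. 0 \<le> d y q" "d y y = 0" "y \<in> Q"
  shows "setdist d y Q = 0"
  using setdist_le[of Q d y y] setdist_nonneg[of Q d y] assms by auto

lemma mem_nbhd_iff:
  assumes "\<forall>q\<in>Q. 0 \<le> d y q" "Q \<noteq> {}"
  shows "y \<in> nbhd d \<epsilon> Q \<longleftrightarrow> (\<exists>q\<in>Q. d y q < \<epsilon>)"
proof -
  have "bdd_below (d y ` Q)" using assms(1) by (intro bdd_belowI2) auto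
  then show ?thesis unfolding nbhd_def setdist_def using assms(2) by (simp add: cINF_less_iff)
qed

lemma phi_Suc_shift: "phi F (Suc k) y \<omega> = phi F k (F (\<omega> 0) y) (\<lambda>i. \<omega> (Suc i))"
  by (induction k) auto

lemma mean_le_of_single_spike:
  fixes f :: "nat \<Rightarrow> real"
  assumes "\<forall>i. i \<noteq> m \<longrightarrow> f i = 0" "f m \<le> 1" "n \<ge> 1"
  shows "1 / real n * (\<Sum>i<n. f i) \<le> 1 / real (Suc m)"
proof -
  have "(\<Sum>i<n. f i) = (\<Sum>i<n. if i = m then f m else 0)"
    using assms(1) by (intro sum.cong) auto
  then have sum: "(\<Sum>i<n. f i) = (if m < n then f m else 0)" by simp
  show ?thesis
  proof (cases "m < n")
    case True
    have "1 / real n * f m \<le> 1 / real n" using assms(2) by (simp add: divide_right_mono)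
    also have "\<dots> \<le> 1 / real (Suc m)" using True by (simp add: frac_le)
    finally show ?thesis using sum True by simp
  qed (simp add: sum)
qed

section \<open>Sequences obtained by concatenating words\<close>

definition flat_words :: "'a list set \<Rightarrow> (nat \<Rightarrow> 'a) set" where
  "flat_words W = {x. \<exists>ws. sset ws \<subseteq> W \<and> x = snth (flat ws)}"

lemma Qex_eq_flat_words: "Qex = flat_words {[A, B], [C, D, E]}"
  by (simp add: Qex_def flat_words_def)

lemma mem_flat_words_iff:
  assumes "[] \<notin> W"
  shows "x \<in> flat_words W \<longleftrightarrow>
    (\<exists>w\<in>W. (\<forall>j<length w. x j = w ! j) \<and> (\<lambda>n. x (n + length w)) \<in> flat_words W)"
proof
  assume "x \<in> flat_words W"
  then obtain ws where ws: "sset ws \<subseteq> W" "x = snth (flat ws)"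
    unfolding flat_words_def by blast
  have w: "shd ws \<in> W" using ws(1) shd_sset by blast
  then have fl: "flat ws = shd ws @- flat (stl ws)" using assms by (metis flat_unfold)
  have "\<forall>j<length (shd ws). x j = shd ws ! j" by (simp add: ws(2) fl)
  moreover have "(\<lambda>n. x (n + length (shd ws))) = snth (flat (stl ws))"
    by (simp add: ws(2) fl)
  moreover have "sset (stl ws) \<subseteq> W" using ws(1) stl_sset by (metis subset_iff)
  ultimately show "\<exists>w\<in>W. (\<forall>j<length w. x j = w ! j) \<and> (\<lambda>n. x (n + length w)) \<in> flat_words W"
    using w unfolding flat_words_def by blast
next
  assume "\<exists>w\<in>W. (\<forall>j<length w. x j = w ! j) \<and> (\<lambda>n. x (n + length w)) \<in> flat_words W"
  then obtain w ws where w: "w \<in> W" "\<forall>j<length w. x j = w ! j"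
    and ws: "sset ws \<subseteq> W" "(\<lambda>n. x (n + length w)) = snth (flat ws)"
    unfolding flat_words_def by blast
  have "w \<noteq> []" using w(1) assms by auto
  have "x = snth (flat (w ## ws))"
  proof
    fix n
    show "x n = flat (w ## ws) !! n"
    proof (cases "n < length w")
      case False
      then have "x n = flat ws !! (n - length w)" using fun_cong[OF ws(2), of "n - length w"] by simp
      then show ?thesis using \<open>w \<noteq> []\<close> False by simp
    qed (use w \<open>w \<noteq> []\<close> in simp)
  qed
  moreover have "sset (w ## ws) \<subseteq> W" using w(1) ws(1) by simp
  ultimately show "x \<in> flat_words W" unfolding flat_words_def by blast
qed

lemma flat_snth_cong:
  assumes "\<forall>xs\<in>sset ws. xs \<noteq> []" "\<forall>xs\<in>sset ws'. xs \<noteq> []" "\<forall>i\<le>j. ws !! i = ws' !! i"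
  shows "flat ws !! j = flat ws' !! j"
  using assms
proof (induction j arbitrary: ws ws' rule: less_induct)
  case (less j)
  have hd: "shd ws = shd ws'" using less.prems(3) by (metis le0 snth.simps(1))
  have "shd ws \<noteq> []" using less.prems(1) shd_sset by blast
  show ?case
  proof (cases "j < length (shd ws)")
    case False
    have "flat (stl ws) !! (j - length (shd ws)) = flat (stl ws') !! (j - length (shd ws))"
    proof (rule less.IH)
      have len: "0 < length (shd ws)" using \<open>shd ws \<noteq> []\<close> by simp
      then show "j - length (shd ws) < j" using False by arith
      show "\<forall>xs\<in>sset (stl ws). xs \<noteq> []" "\<forall>xs\<in>sset (stl ws'). xs \<noteq> []"
        using less.prems(1,2) stl_sset by metis+
      show "\<forall>i\<le>j - length (shd ws). stl ws !! i = stl ws' !! i"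
      proof (intro allI impI)
        fix i assume "i \<le> j - length (shd ws)"
        then have "Suc i \<le> j" using len False by arith
        then show "stl ws !! i = stl ws' !! i" using less.prems(3) by (simp flip: snth.simps(2))
      qed
    qed
    then show ?thesis using less.prems(1,2) hd False by (simp add: flat_snth)
  qed (use less.prems(1,2) hd in \<open>simp add: flat_snth\<close>)
qed

definition flat_seq :: "(nat \<Rightarrow> 'a list) \<Rightarrow> nat \<Rightarrow> 'a" where
  "flat_seq g = snth (flat (smap g nats))"

lemma flat_seq_cong:
  assumes "\<forall>i. g i \<noteq> []" "\<forall>i. h i \<noteq> []" "\<forall>i\<le>j. g i = h i"
  shows "flat_seq g j = flat_seq h j"
  unfolding flat_seq_def using assms by (intro flat_snth_cong) (auto simp: sset_range)

lemma flat_words_eq_image: "flat_words W = flat_seq ` (PiE UNIV (\<lambda>_. W))"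
proof (intro equalityI subsetI)
  fix x assume "x \<in> flat_words W"
  then obtain ws where ws: "sset ws \<subseteq> W" "x = snth (flat ws)" unfolding flat_words_def by blast
  have "x = flat_seq (snth ws)"
    unfolding flat_seq_def ws(2) by (metis stream_smap_nats)
  moreover have "snth ws \<in> PiE UNIV (\<lambda>_. W)"
    using ws(1) snth_sset by (auto simp: PiE_UNIV_domain)
  ultimately show "x \<in> flat_seq ` (PiE UNIV (\<lambda>_. W))" by blast
next
  fix x assume "x \<in> flat_seq ` (PiE UNIV (\<lambda>_. W))"
  then obtain g where "\<forall>i. g i \<in> W" "x = flat_seq g" by (force simp: PiE_iff)
  then show "x \<in> flat_words W"
    unfolding flat_words_def flat_seq_def by (auto simp: sset_range intro!: exI[of _ "smap g nats"])
qed

lemma continuous_map_flat_seq: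
  assumes "[] \<notin> W"
  shows "continuous_map (product_topology (\<lambda>_. discrete_topology W) UNIV)
           (Metric_space.mtopology UNIV rho) flat_seq"
proof -
  interpret Metric_space UNIV rho by (rule Metric_space_rho)
  show ?thesis unfolding continuous_map_to_metric
  proof (intro ballI allI impI)
    fix g :: "nat \<Rightarrow> sym list" and \<epsilon> :: real
    assume g: "g \<in> topspace (product_topology (\<lambda>_. discrete_topology W) UNIV)" and "\<epsilon> > 0"
    then obtain n where n: "inverse (real (Suc n)) < \<epsilon>" using reals_Archimedean by blast
    define U where "U = PiE UNIV (\<lambda>i. if i \<le> n then {g i} else W)"
    have gW: "\<forall>i. g i \<in> W" using g by auto
    have "openin (product_topology (\<lambda>_. discrete_topology W) UNIV) U"
      unfolding U_def openin_PiE_gen using gW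
      by (auto intro: finite_subset[of _ "{..n}"])
    moreover have "g \<in> U" using gW by (auto simp: U_def)
    moreover have "flat_seq h \<in> mball (flat_seq g) \<epsilon>" if "h \<in> U" for h
    proof -
      have "\<forall>i. (i \<le> n \<longrightarrow> h i = g i) \<and> (i \<le> n \<or> h i \<in> W)"
        using that by (auto simp: U_def PiE_iff split: if_splits)
      then have hW: "\<forall>i. h i \<in> W" and agree: "\<forall>i\<le>n. g i = h i" using gW by metis+
      have ne: "\<forall>i. g i \<noteq> []" "\<forall>i. h i \<noteq> []" using gW hW assms by metis+
      have "\<forall>j<Suc n. flat_seq g j = flat_seq h j"
        using flat_seq_cong[OF ne] agree by simp
      then have "rho (flat_seq g) (flat_seq h) \<le> 1 / (real (Suc n) + 1)" by (rule rho_le_of_agree)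
      also have "\<dots> \<le> inverse (real (Suc n))" by (simp add: inverse_eq_divide frac_le)
      also have "\<dots> < \<epsilon>" by (rule n)
      finally show ?thesis by simp
    qed
    ultimately show "\<exists>U. openin (product_topology (\<lambda>_. discrete_topology W) UNIV) U \<and> g \<in> U \<and>
        (\<forall>h\<in>U. flat_seq h \<in> mball (flat_seq g) \<epsilon>)" by blast
  qed
qed

lemma compactin_flat_words:
  assumes "finite W" "[] \<notin> W"
  shows "compactin (Metric_space.mtopology UNIV rho) (flat_words W)"
proof -
  have "compact_space (product_topology (\<lambda>_. discrete_topology W) UNIV)"
    using assms(1) by (simp add: compact_space_product_topology compact_space_discrete_topology)
  then show ?thesis
    unfolding flat_words_eq_image compact_space_def
    using image_compactin continuous_map_flat_seq[OF assms(2)] by fastforce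
qed

lemma mem_Qex_iff:
  "y \<in> Qex \<longleftrightarrow> (y 0 = A \<and> y 1 = B \<and> (\<lambda>n. y (n + 2)) \<in> Qex) \<or>
                 (y 0 = C \<and> y 1 = D \<and> y 2 = E \<and> (\<lambda>n. y (n + 3)) \<in> Qex)"
  unfolding Qex_eq_flat_words
  by (subst mem_flat_words_iff) (auto simp: less_Suc_eq numeral_2_eq_2 numeral_3_eq_3)

lemma Qex_first: "y \<in> Qex \<Longrightarrow> y 0 = A \<or> y 0 = C"
  using mem_Qex_iff by blast

definition ab_inf :: seq where
  "ab_inf = (\<lambda>n. if even n then A else B)"

lemma ab_inf_in_Qex: "ab_inf \<in> Qex"
proof -
  have fl: "flat (sconst [A, B]) = [A, B] @- flat (sconst [A, B])"
    by (metis flat_Stream list.distinct(1) siterate.code id_apply)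
  have "flat (sconst [A, B]) !! n = ab_inf n" for n
  proof (induction n rule: less_induct)
    case (less n)
    show ?case
    proof (cases "n < 2")
      case False
      then obtain m where m: "n = m + 2" by (metis add.commute le_Suc_ex not_less)
      have "flat (sconst [A, B]) !! n = flat (sconst [A, B]) !! m" by (subst fl) (simp add: m)
      also have "\<dots> = ab_inf m" by (rule less.IH) (simp add: m)
      also have "\<dots> = ab_inf n" by (simp add: ab_inf_def m)
      finally show ?thesis .
    qed (subst fl, auto simp: ab_inf_def less_Suc_eq numeral_2_eq_2)
  qed
  then show ?thesis unfolding Qex_def by (intro CollectI exI[of _ "sconst [A, B]"]) auto
qed

lemma Fex_0: "Fex 0 x = (\<lambda>n. x (n + 2))"
  and Fex_1: "Fex 1 x = (\<lambda>n. x (n + 3))"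
  and Fex_2: "Fex 2 x = (\<lambda>n. B)"
  and Fex_ge_3: "u \<ge> 3 \<Longrightarrow> Fex u x = (if x 0 = B then ab_inf else (\<lambda>n. B))"
proof -
  have shift_pow: "(shift ^^ k) x = (\<lambda>n. x (n + k))" for k
    by (induction k) (auto simp: shift_def)
  show "Fex 0 x = (\<lambda>n. x (n + 2))" "Fex 1 x = (\<lambda>n. x (n + 3))" "Fex 2 x = (\<lambda>n. B)"
    by (simp_all add: Fex_def shift_pow)
  show "u \<ge> 3 \<Longrightarrow> Fex u x = (if x 0 = B then ab_inf else (\<lambda>n. B))"
    by (simp add: Fex_def ab_inf_def)
qed

definition lead_ctl :: "seq \<Rightarrow> nat" where
  "lead_ctl y = (if y 0 = A then 0 else 1)"

definition strip :: "seq \<Rightarrow> seq" where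
  "strip y = Fex (lead_ctl y) y"

lemma strip_eq: "strip y = (\<lambda>n. y (n + (if y 0 = A then 2 else 3)))"
proof (cases "y 0 = A")
  case False
  then have "strip y = Fex 1 y" by (simp add: strip_def lead_ctl_def)
  also have "\<dots> = (\<lambda>n. y (n + 3))" by (rule Fex_1)
  finally show ?thesis using False by simp
qed (simp add: strip_def lead_ctl_def Fex_0)

lemma strip_in_Qex: "y \<in> Qex \<Longrightarrow> strip y \<in> Qex"
  using mem_Qex_iff[of y] by (auto simp: strip_eq)

lemma Qex_eq_on_lead_word:
  assumes "y \<in> Qex" "y' \<in> Qex" "y 0 = y' 0" "j < (if y 0 = A then 2 else 3)"
  shows "y j = y' j"
  using assms mem_Qex_iff[of y] mem_Qex_iff[of y']
  by (auto simp: less_Suc_eq numeral_2_eq_2 numeral_3_eq_3 split: if_splits)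

lemma strip_cong:
  assumes "\<forall>j<m + 3. y j = x j"
  shows "lead_ctl y = lead_ctl x \<and> (\<forall>j<m. strip y j = strip x j)"
  using assms by (auto simp: strip_eq lead_ctl_def)

lemma phi_follows_strip:
  assumes "\<forall>j<3 * K. y j = x j" "k \<le> K" "\<forall>i<k. \<omega> i = lead_ctl ((strip ^^ i) x)"
  shows "phi Fex k y \<omega> = (strip ^^ k) y \<and> (\<forall>j<3 * (K - k). (strip ^^ k) y j = (strip ^^ k) x j)"
  using assms(2,3)
proof (induction k)
  case (Suc k)
  then have IH: "phi Fex k y \<omega> = (strip ^^ k) y"
    "\<forall>j<(3 * (K - Suc k)) + 3. (strip ^^ k) y j = (strip ^^ k) x j"
    by (auto simp: Suc_diff_Suc)
  have ctl: "lead_ctl ((strip ^^ k) y) = lead_ctl ((strip ^^ k) x)"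
    and agree: "\<forall>j<3 * (K - Suc k). strip ((strip ^^ k) y) j = strip ((strip ^^ k) x) j"
    using strip_cong[OF IH(2)] by auto
  have "phi Fex (Suc k) y \<omega> = Fex (lead_ctl ((strip ^^ k) x)) ((strip ^^ k) y)"
    using IH(1) Suc.prems(2) by simp
  also have "\<dots> = (strip ^^ Suc k) y" by (simp add: strip_def ctl)
  finally show ?case using agree by simp
qed (use assms(1) in simp)

section \<open>Equi-invariance in the mean\<close>

definition detour_ctl :: "seq \<Rightarrow> nat \<Rightarrow> nat \<Rightarrow> nat" where
  "detour_ctl x K k = (if k < K then lead_ctl ((strip ^^ k) x)
                       else if k = K then 2 else if k = Suc K then 3 else 0)"

lemma detour_ctl_in_ctrl_seqs: "detour_ctl x K \<in> ctrl_seqs Uex"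
  by (auto simp: ctrl_seqs_def Uex_def detour_ctl_def lead_ctl_def)

lemma phi_detour_ctl_in_Qex:
  assumes y: "y \<in> Qex" and agree: "\<forall>j<3 * K. y j = x j" and "i \<noteq> Suc K"
  shows "phi Fex i y (detour_ctl x K) \<in> Qex"
proof (cases "i \<le> K")
  case True
  then have "phi Fex i y (detour_ctl x K) = (strip ^^ i) y"
    using phi_follows_strip[OF agree True] by (simp add: detour_ctl_def)
  moreover have "(strip ^^ i) y \<in> Qex" using y by (induction i) (auto intro: strip_in_Qex)
  ultimately show ?thesis by simp
next
  case False
  have tail: "phi Fex (Suc (Suc K) + j) y (detour_ctl x K) = ab_inf" for j
    by (induction j) (simp_all add: detour_ctl_def Fex_2 Fex_ge_3 Fex_0 ab_inf_def)
  have "Suc (Suc K) \<le> i" using False \<open>i \<noteq> Suc K\<close> by simp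
  then obtain j where "i = Suc (Suc K) + j" using le_Suc_ex by blast
  then show ?thesis using tail ab_inf_in_Qex by simp
qed

lemma equi_inv_mean_point_Qex:
  assumes x: "x \<in> Qex"
  shows "equi_inv_mean_point rho Fex Uex Qex x"
  unfolding equi_inv_mean_point_def
proof (intro conjI allI impI)
  show "x \<in> Qex" by (rule x)
  fix \<epsilon> :: real assume "\<epsilon> > 0"
  then obtain K where K: "inverse (real (Suc K)) < \<epsilon>" using reals_Archimedean by blast
  define \<delta> where "\<delta> = 1 / (real (3 * K) + 1)"
  have "1 / real n * (\<Sum>i<n. setdist rho (phi Fex i y (detour_ctl x K)) Qex) < \<epsilon>"
    if n: "n \<ge> 1" and y: "y \<in> oball rho x \<delta> \<inter> Qex" for n y
  proof -
    have "\<forall>j<3 * K. y j = x j"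
      using y agree_of_rho_less[of x y "3 * K"] by (auto simp: oball_def \<delta>_def)
    then have "\<forall>i. i \<noteq> Suc K \<longrightarrow> setdist rho (phi Fex i y (detour_ctl x K)) Qex = 0"
      using phi_detour_ctl_in_Qex y setdist_eq_0[of Qex rho] rho_nonneg by simp
    moreover have "setdist rho (phi Fex (Suc K) y (detour_ctl x K)) Qex \<le> 1"
      using setdist_le[OF _ ab_inf_in_Qex] rho_nonneg rho_le_1 by (meson order_trans)
    ultimately have "1 / real n * (\<Sum>i<n. setdist rho (phi Fex i y (detour_ctl x K)) Qex)
        \<le> 1 / real (Suc (Suc K))"
      using n by (intro mean_le_of_single_spike) auto
    also have "\<dots> \<le> inverse (real (Suc K))" by (simp add: inverse_eq_divide frac_le)
    finally show ?thesis using K by linarith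
  qed
  moreover have "\<delta> > 0" by (simp add: \<delta>_def)
  ultimately show "\<exists>\<delta>>0. \<exists>\<omega>\<in>ctrl_seqs Uex. \<forall>n. 1 \<le> n \<longrightarrow> (\<forall>y\<in>oball rho x \<delta> \<inter> Qex.
      1 / real n * (\<Sum>i<n. setdist rho (phi Fex i y \<omega>) Qex) < \<epsilon>)"
    using detour_ctl_in_ctrl_seqs by blast
qed

section \<open>Failure of finite equi-invariance\<close>

lemma nbhd_1_Qex_first:
  assumes "z \<in> nbhd rho 1 Qex"
  shows "z 0 = A \<or> z 0 = C"
proof -
  obtain q where q: "q \<in> Qex" "rho z q < 1 / (real 0 + 1)"
    using assms mem_nbhd_iff[of Qex rho z 1] rho_nonneg ab_inf_in_Qex by auto
  then show ?thesis using agree_of_rho_less[OF q(2), of 0] Qex_first by simp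
qed

lemma Fex_leaves_Qex:
  assumes "y \<in> Qex" "u \<noteq> lead_ctl y"
  shows "Fex u y 0 \<noteq> A \<and> Fex u y 0 \<noteq> C"
proof -
  consider "u = 0" | "u = 1" | "u = 2" | "u \<ge> 3" by linarith
  then show ?thesis
  proof cases
    case 1
    then have "y 0 = C" "y 2 = E" using assms mem_Qex_iff[of y] by (auto simp: lead_ctl_def)
    then show ?thesis using 1 by (simp add: Fex_0 numeral_2_eq_2)
  next
    case 2
    then have "y 0 = A" "(\<lambda>n. y (n + 2)) \<in> Qex" using assms mem_Qex_iff[of y] by (auto simp: lead_ctl_def)
    then have "y 3 = B \<or> y 3 = D" using mem_Qex_iff[of "\<lambda>n. y (n + 2)"] by (auto simp: numeral_3_eq_3)
    then show ?thesis using 2 Fex_1 by auto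
  next
    case 3
    then show ?thesis by (simp add: Fex_2)
  next
    case 4
    then show ?thesis using Qex_first[OF assms(1)] by (auto simp: Fex_ge_3)
  qed
qed

(* Taking \<epsilon> = 1 suffices: 1-closeness to Q only prescribes the first letter (a or c). *)
definition stays_near :: "(nat \<Rightarrow> nat) \<Rightarrow> seq \<Rightarrow> bool" where
  "stays_near \<omega> y \<longleftrightarrow> (\<forall>k. phi Fex k y \<omega> \<in> nbhd rho 1 Qex)"

lemma stays_near_Suc: "stays_near \<omega> y \<Longrightarrow> stays_near (\<lambda>i. \<omega> (Suc i)) (Fex (\<omega> 0) y)"
  unfolding stays_near_def by (metis phi_Suc_shift)

lemma stays_near_lead_ctl:
  assumes "y \<in> Qex" "stays_near \<omega> y"
  shows "\<omega> 0 = lead_ctl y"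
proof -
  have "phi Fex (Suc 0) y \<omega> \<in> nbhd rho 1 Qex" using assms(2) unfolding stays_near_def by blast
  then have "Fex (\<omega> 0) y 0 = A \<or> Fex (\<omega> 0) y 0 = C" using nbhd_1_Qex_first by simp
  then show ?thesis using Fex_leaves_Qex[OF assms(1)] by blast
qed

lemma stays_near_unique:
  assumes "y \<in> Qex" "y' \<in> Qex" "stays_near \<omega> y" "stays_near \<omega> y'"
  shows "y = y'"
proof
  fix j
  show "y j = y' j"
    using assms
  proof (induction j arbitrary: \<omega> y y' rule: less_induct)
    case (less j)
    have ctl: "\<omega> 0 = lead_ctl y" "\<omega> 0 = lead_ctl y'"
      using stays_near_lead_ctl less.prems by blast+
    then have first: "y 0 = y' 0"
      using Qex_first[OF less.prems(1)] Qex_first[OF less.prems(2)] by (auto simp: lead_ctl_def)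
    define l where "l = (if y 0 = A then 2 else 3 :: nat)"
    show ?case
    proof (cases "j < l")
      case True
      then show ?thesis using Qex_eq_on_lead_word less.prems(1,2) first by (simp add: l_def)
    next
      case False
      then obtain i where i: "j = i + l" by (metis add.commute le_Suc_ex not_less)
      have "stays_near (\<lambda>i. \<omega> (Suc i)) (strip y)"
        using stays_near_Suc[OF less.prems(3)] ctl(1) by (simp add: strip_def)
      moreover have "stays_near (\<lambda>i. \<omega> (Suc i)) (strip y')"
        using stays_near_Suc[OF less.prems(4)] ctl(2) by (simp add: strip_def)
      ultimately have
      "strip y i = strip y' i"
        using less.IH[of i] strip_in_Qex less.prems(1,2) i by (simp add: l_def)
      then show ?thesis using i first by (simp add: strip_eq l_def)
    qed
  qed
qed

definition ab_pow_cde :: "nat \<Rightarrow> seq" where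
  "ab_pow_cde m = (\<lambda>j. if j < 2 * m then ab_inf j else if j = 2 * m then C
     else if j = 2 * m + 1 then D else if j = 2 * m + 2 then E else ab_inf (j - 2 * m - 3))"

lemma ab_pow_cde_in_Qex: "ab_pow_cde m \<in> Qex"
proof (induction m)
  case 0
  have "(\<lambda>n. ab_pow_cde 0 (n + 3)) = ab_inf" by (simp add: ab_pow_cde_def)
  then show ?case using ab_inf_in_Qex by (subst mem_Qex_iff) (simp add: ab_pow_cde_def)
next
  case (Suc m)
  have "(\<lambda>n. ab_pow_cde (Suc m) (n + 2)) = ab_pow_cde m" by (auto simp: ab_pow_cde_def ab_inf_def)
  then show ?case using Suc.IH by (subst mem_Qex_iff) (simp add: ab_pow_cde_def ab_inf_def)
qed

lemma rho_ab_inf_ab_pow_cde: "rho ab_inf (ab_pow_cde m) \<le> 1 / (real (2 * m) + 1)"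
  by (rule rho_le_of_agree) (simp add: ab_pow_cde_def)

lemma inj_ab_pow_cde: "inj ab_pow_cde"
proof (rule injI)
  have "ab_pow_cde m \<noteq> ab_pow_cde m'" if "m < m'" for m m'
  proof -
    have "ab_pow_cde m (2 * m) = C" "ab_pow_cde m' (2 * m) = A"
      using that by (simp_all add: ab_pow_cde_def ab_inf_def)
    then show ?thesis by auto
  qed
  then show "ab_pow_cde m = ab_pow_cde m' \<Longrightarrow> m = m'" for m m'
    by (metis linorder_neqE_nat)
qed

lemma not_fin_equi_inv_point_ab_inf: "\<not> fin_equi_inv_point rho Fex Uex Qex ab_inf"
proof
  assume "fin_equi_inv_point rho Fex Uex Qex ab_inf"
  then obtain \<delta> Fs where "\<delta> > 0" "finite Fs"
    and cover: "\<forall>y \<in> oball rho ab_inf \<delta> \<inter> Qex. \<exists>\<omega>\<in>Fs. stays_near \<omega> y"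
    unfolding fin_equi_inv_point_def stays_near_def by (meson zero_less_one)
  then obtain M where M: "inverse (real (Suc M)) < \<delta>" using reals_Archimedean by blast
  let ?S = "ab_pow_cde ` {M..}"
  have S: "?S \<subseteq> oball rho ab_inf \<delta> \<inter> Qex"
  proof
    fix y assume "y \<in> ?S"
    then obtain m where m: "m \<ge> M" "y = ab_pow_cde m" by auto
    have "rho ab_inf y \<le> 1 / (real (2 * m) + 1)" using rho_ab_inf_ab_pow_cde m(2) by simp
    also have "\<dots> \<le> inverse (real (Suc M))" using m(1) by (simp add: inverse_eq_divide frac_le)
    finally show "y \<in> oball rho ab_inf \<delta> \<inter> Qex" using M m(2) ab_pow_cde_in_Qex by (simp add: oball_def)
  qed
  then have "\<forall>y\<in>?S. \<exists>\<omega>\<in>Fs. stays_near \<omega> y" using cover by blast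
  then obtain c where c: "\<forall>y\<in>?S. c y \<in> Fs \<and> stays_near (c y) y" by metis
  have "inj_on c ?S"
  proof (rule inj_onI)
    fix y y' assume y: "y \<in> ?S" and y': "y' \<in> ?S" and "c y = c y'"
    have "stays_near (c y) y" "stays_near (c y') y'" using c y y' by blast+
    then have "stays_near (c y) y" "stays_near (c y) y'" using \<open>c y = c y'\<close> by simp_all
    moreover have "y \<in> Qex" "y' \<in> Qex" using y y' S by blast+
    ultimately show "y = y'" using stays_near_unique by blast
  qed
  moreover have "c ` ?S \<subseteq> Fs" using c by auto
  ultimately have "finite ?S" using \<open>finite Fs\<close> by (rule inj_on_finite)
  then have "finite {M..}" using finite_imageD inj_on_subset[OF inj_ab_pow_cde] by blast
  then show False using infinite_Ici by blast
qed

theorem mainTheorem15: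
  shows "compactin (Metric_space.mtopology UNIV rho) Qex
         \<and> equi_inv_mean rho Fex Uex Qex
         \<and> \<not> fin_equi_inv rho Fex Uex Qex"
proof (intro conjI)
  show "compactin (Metric_space.mtopology UNIV rho) Qex"
    unfolding Qex_eq_flat_words by (rule compactin_flat_words) auto
  show "equi_inv_mean rho Fex Uex Qex"
    by (simp add: equi_inv_mean_def equi_inv_mean_point_Qex)
  show "\<not> fin_equi_inv rho Fex Uex Qex"
    using not_fin_equi_inv_point_ab_inf ab_inf_in_Qex by (auto simp: fin_equi_inv_def)
qed

end
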